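(* Let $h\in\mathcal H$, $k_0=k_0(h)$, $h_0=h(k_0)$, and let $d>h_0$ be an integer. If $h(k)\ge (d-k+1)\,h(k-1)$ for all integers $k$ with $k_0+1\le k\le d$, then $\operatorname{hdepth}(h)\ge d$.
   Context: $\mathcal H$ denotes the set of nonzero functions $h:\mathbb Z\to\mathbb Z_{\ge 0}$ such that $h(j)=0$ for all sufficiently negative $j$. For $h\in\mathcal H$ and integers $k\le d$, set $\beta_k^d(h)=\sum_{j\le k}(-1)^{k-j}\binom{d-j}{k-j}h(j)$, and $\operatorname{hdepth}(h)=\max\{d\in\mathbb Z:\ \beta_k^d(h)\ge 0\text{ for all integers }k\le d\}$. Also $k_0(h)=\min\{j: h(j)>0\}$. *)

theory Defs
  imports Main
begin

definition hclass :: "(int \<Rightarrow> nat) set" where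
  "hclass = {h. h \<noteq> (\<lambda>_. 0) \<and> (\<exists>m. \<forall>j\<le>m. h j = 0)}"

text \<open>beta_k^d(h) = sum_{j<=k} (-1)^(k-j) binom(d-j, k-j) h(j), intended for k <= d.
  The sum ranges over the (finite, for h in H) set of j <= k with h j nonzero;
  the omitted terms are zero.\<close>
definition beta :: "(int \<Rightarrow> nat) \<Rightarrow> int \<Rightarrow> int \<Rightarrow> int" where
  "beta h d k = (\<Sum>j\<in>{j. j \<le> k \<and> h j \<noteq> 0}.
      (-1) ^ nat (k - j) * int (nat (d - j) choose nat (k - j)) * int (h j))"

definition hdepth :: "(int \<Rightarrow> nat) \<Rightarrow> int" where
  "hdepth h = (GREATEST d. \<forall>k\<le>d. beta h d k \<ge> 0)"

definition k0 :: "(int \<Rightarrow> nat) \<Rightarrow> int" where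
  "k0 h = (LEAST j. h j > 0)"

end

theory Submission
  imports Defs
begin

text \<open>Below k0(h) every term of beta vanishes, so for k0(h) \<le> k \<le> d, after reindexing by
  i = k - j, beta_k^d(h) is the alternating sum of b_i = binom(d-k+i, i) h(k-i).
  The growth hypothesis h(j) \<ge> (d-j+1) h(j-1), combined with
  binom(M+1, i+1) \<le> (M+1) binom(M, i), makes b_i nonincreasing, and an alternating sum
  of a nonincreasing nonnegative sequence is nonnegative.
  The maximum defining hdepth exists since beta_{k0+1}^{d'}(h) = h(k0+1) - (d'-k0) h(k0)
  bounds every admissible d' by k0 + h(k0+1).\<close>

lemma alternating_sum_antimono_bounds:
  fixes b :: "nat \<Rightarrow> int"
  assumes "\<And>i. i < n \<Longrightarrow> b (Suc i) \<le> b i" and "\<And>i. i \<le> n \<Longrightarrow> 0 \<le> b i"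
  shows "0 \<le> (\<Sum>i\<le>n. (-1)^i * b i) \<and> (\<Sum>i\<le>n. (-1)^i * b i) \<le> b 0"
  using assms
proof (induction n arbitrary: b)
  case 0
  then show ?case by simp
next
  case (Suc n)
  have IH: "0 \<le> (\<Sum>i\<le>n. (-1)^i * b (Suc i)) \<and> (\<Sum>i\<le>n. (-1)^i * b (Suc i)) \<le> b 1"
    using Suc.IH[of "\<lambda>i. b (Suc i)"] Suc.prems by auto
  have "(\<Sum>i\<le>Suc n. (-1)^i * b i) = b 0 - (\<Sum>i\<le>n. (-1)^i * b (Suc i))"
    by (simp only: sum.atMost_Suc_shift) (simp add: sum_negf)
  moreover have "b 1 \<le> b 0" using Suc.prems(1) by auto
  ultimately show ?case using IH by linarith
qed

lemma Suc_choose_Suc_le: "Suc m choose Suc i \<le> Suc m * (m choose i)"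
  by (metis Suc_times_binomial_eq le_add1 mult.commute mult_Suc_right)

lemma hclass_k0:
  assumes "h \<in> hclass"
  shows "h (k0 h) > 0" and "\<And>j. j < k0 h \<Longrightarrow> h j = 0"
proof -
  obtain m where m: "\<And>j. j \<le> m \<Longrightarrow> h j = 0" and "h \<noteq> (\<lambda>_. 0)"
    using assms unfolding hclass_def by auto
  then obtain j1 where j1: "h j1 > 0" by auto
  have bounded_below: "m < j" if "h j > 0" for j
    using m that by (metis less_numeral_extra(3) not_less)
  define n where "n = (LEAST n::nat. h (m + int n) > 0)"
  have "h (m + int (nat (j1 - m))) > 0" using j1 bounded_below[OF j1] by simp
  then have least: "h (m + int n) > 0" unfolding n_def by (rule LeastI)
  have minimal: "m + int n \<le> i" if "h i > 0" for i
  proof -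
    have "i = m + int (nat (i - m))" using bounded_below[OF that] by simp
    then have "n \<le> nat (i - m)" unfolding n_def using that by (metis Least_le)
    with bounded_below[OF that] show ?thesis by linarith
  qed
  have k0_eq: "k0 h = m + int n"
    unfolding k0_def using least minimal by (rule Least_equality)
  then show "h (k0 h) > 0" using least by simp
  show "h j = 0" if "j < k0 h" for j
    using minimal[of j] that k0_eq by fastforce
qed

lemma beta_eq_sum_atLeastAtMost:
  assumes "\<And>j. j < a \<Longrightarrow> h j = 0"
  shows "beta h d k =
    (\<Sum>j\<in>{a..k}. (-1) ^ nat (k - j) * int (nat (d - j) choose nat (k - j)) * int (h j))"
  unfolding beta_def
proof (rule sum.mono_neutral_cong_left)
  show "{j. j \<le> k \<and> h j \<noteq> 0} \<subseteq> {a..k}"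
    using assms by (auto simp: not_less[symmetric])
qed auto

lemma beta_eq_alternating_sum:
  assumes "\<And>j. j < a \<Longrightarrow> h j = 0" and "a \<le> k" and "k \<le> d"
  shows "beta h d k =
    (\<Sum>i\<le>nat (k - a). (-1)^i * int ((nat (d - k) + i choose i) * h (k - int i)))"
proof -
  have "beta h d k =
    (\<Sum>j\<in>{a..k}. (-1) ^ nat (k - j) * int (nat (d - j) choose nat (k - j)) * int (h j))"
    using assms(1) by (rule beta_eq_sum_atLeastAtMost)
  also have "\<dots> = (\<Sum>i\<le>nat (k - a). (-1)^i * int ((nat (d - k) + i choose i) * h (k - int i)))"
  proof (rule sum.reindex_bij_witness[where j="\<lambda>j. nat (k - j)" and i="\<lambda>i. k - int i"])
    fix j assume j: "j \<in> {a..k}"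
    then have "nat (d - j) = nat (d - k) + nat (k - j)"
      using \<open>k \<le> d\<close> by (simp add: nat_add_distrib[symmetric])
    with j show "(-1) ^ nat (k - j) * int ((nat (d - k) + nat (k - j) choose nat (k - j))
        * h (k - int (nat (k - j))))
      = (-1) ^ nat (k - j) * int (nat (d - j) choose nat (k - j)) * int (h j)"
      by simp
  qed (use \<open>a \<le> k\<close> in auto)
  finally show ?thesis .
qed

lemma beta_nonneg_of_growth:
  assumes below: "\<And>j. j < a \<Longrightarrow> h j = 0"
    and growth: "\<And>j. a + 1 \<le> j \<Longrightarrow> j \<le> d \<Longrightarrow> h j \<ge> nat (d - j + 1) * h (j - 1)"
    and "k \<le> d"
  shows "beta h d k \<ge> 0"
proof (cases "k < a")
  case True
  then show ?thesis using beta_eq_sum_atLeastAtMost[of a h d k, OF below] by simp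
next
  case False
  define b where "b i = int ((nat (d - k) + i choose i) * h (k - int i))" for i
  have "b (Suc i) \<le> b i" if i: "i < nat (k - a)" for i
  proof -
    define j where "j = k - int i"
    define M where "M = nat (d - k) + i"
    have "a + 1 \<le> j" "j \<le> d" "nat (d - j + 1) = Suc M"
      using i \<open>k \<le> d\<close> by (auto simp: j_def M_def)
    then have hj: "Suc M * h (j - 1) \<le> h j" using growth by metis
    have "(Suc M choose Suc i) * h (j - 1) \<le> (M choose i) * (Suc M * h (j - 1))"
      using mult_right_mono[OF Suc_choose_Suc_le, of "h (j - 1)" M i] by (simp only: mult_ac)
    also have "\<dots> \<le> (M choose i) * h j" using hj by (rule mult_left_mono) simp
    finally show ?thesis
      by (simp add: b_def M_def j_def algebra_simps flip: of_nat_mult)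
  qed
  then have "0 \<le> (\<Sum>i\<le>nat (k - a). (-1)^i * b i)"
    using alternating_sum_antimono_bounds[of "nat (k - a)" b] by (simp add: b_def)
  then show ?thesis
    using beta_eq_alternating_sum[of a h k d, OF below _ \<open>k \<le> d\<close>] False by (simp add: b_def)
qed

lemma admissible_depth_bounded:
  assumes below: "\<And>j. j < a \<Longrightarrow> h j = 0" and "h a > 0"
    and admissible: "\<And>k. k \<le> d \<Longrightarrow> beta h d k \<ge> 0"
  shows "d \<le> a + int (h (a + 1))"
proof (rule ccontr)
  assume "\<not> d \<le> a + int (h (a + 1))"
  then have "a + 1 \<le> d" and "int (nat (d - a)) = d - a" by auto
  have "{a..a + 1} = {a, a + 1}" by auto
  then have "beta h d (a + 1) = int (h (a + 1)) - (d - a) * int (h a)"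
    using beta_eq_sum_atLeastAtMost[of a h d "a + 1", OF below] \<open>int (nat (d - a)) = d - a\<close>
    by (simp add: algebra_simps)
  moreover have "d - a \<le> (d - a) * int (h a)"
    using \<open>h a > 0\<close> \<open>a + 1 \<le> d\<close> by simp
  ultimately show False
    using admissible[OF \<open>a + 1 \<le> d\<close>] \<open>\<not> d \<le> a + int (h (a + 1))\<close> by linarith
qed

lemma le_Greatest_int:
  fixes P :: "int \<Rightarrow> bool"
  assumes "P d" and bounded: "\<And>x. P x \<Longrightarrow> x \<le> b"
  shows "d \<le> (GREATEST x. P x)"
proof -
  define S where "S = {x \<in> {d..b}. P x}"
  have "finite S" unfolding S_def by (rule finite_subset[OF _ finite_atLeastAtMost_int]) auto
  moreover have "d \<in> S" using \<open>P d\<close> bounded by (simp add: S_def)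
  ultimately have "Max S \<in> S" by (intro Max_in) auto
  have "(GREATEST x. P x) = Max S"
  proof (rule Greatest_equality)
    show "P (Max S)" using \<open>Max S \<in> S\<close> by (simp add: S_def)
    show "y \<le> Max S" if "P y" for y
    proof (cases "y < d")
      case True
      with \<open>finite S\<close> \<open>d \<in> S\<close> show ?thesis by (meson Max_ge less_imp_le order_trans)
    next
      case False
      with \<open>P y\<close> bounded have "y \<in> S" by (simp add: S_def)
      with \<open>finite S\<close> show ?thesis by simp
    qed
  qed
  with \<open>finite S\<close> \<open>d \<in> S\<close> show ?thesis by simp
qed

theorem proposition1p8:
  fixes h :: "int \<Rightarrow> nat" and d :: int
  assumes "h \<in> hclass"
    and "d > int (h (k0 h))"
    and "\<And>k. k0 h + 1 \<le> k \<Longrightarrow> k \<le> d \<Longrightarrow> h k \<ge> nat (d - k + 1) * h (k - 1)"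
  shows "hdepth h \<ge> d"
proof -
  have below: "\<And>j. j < k0 h \<Longrightarrow> h j = 0" and "h (k0 h) > 0"
    using hclass_k0[OF assms(1)] by auto
  have "\<forall>k\<le>d. beta h d k \<ge> 0"
    using beta_nonneg_of_growth[of "k0 h" h d, OF below assms(3)] by blast
  moreover have "d' \<le> k0 h + int (h (k0 h + 1))" if "\<forall>k\<le>d'. beta h d' k \<ge> 0" for d'
    using admissible_depth_bounded[of "k0 h" h d', OF below \<open>h (k0 h) > 0\<close>] that by blast
  ultimately show ?thesis
    unfolding hdepth_def by (rule le_Greatest_int)
qed

end
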